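(* Let $L\ge 2$ be an integer and let $a_0,\dots,a_{L-2},b_0,\dots,b_{L-1}$ and $\tilde a_0,\dots,\tilde a_{L-2},\tilde b_0,\dots,\tilde b_{L-1}$ be real numbers. Let $\mathcal{B}\in\mathcal{L}^{2}$ and $\tilde{\mathcal{B}}\in\mathcal{L}^{2,c}$ (with lag $l<L$) be single-input single-output behaviors with signals $w=(u,y)$, and suppose their length-$L$ restricted behaviors, written in the coordinate ordering $w=\mathrm{col}(y_0,u_0,y_1,u_1,\dots,y_{L-2},u_{L-2},u_{L-1},y_{L-1})\in\mathbb{R}^{2L}$, are $$\mathcal{B}|_L=\Big\{w:\ y_{L-1}=\sum_{k=0}^{L-2}a_k y_k+\sum_{k=0}^{L-1}b_k u_k\Big\},\qquad \tilde{\mathcal{B}}|_L=\Big\{w:\ y_{L-1}=\sum_{k=0}^{L-2}\tilde a_k y_k+\sum_{k=0}^{L-1}\tilde b_k u_k\Big\}.$$ Define the row vectors $F=[a_0\ b_0\ a_1\ b_1\ \cdots\ a_{L-2}\ b_{L-2}\ b_{L-1}]$ and $\tilde F=[\tilde a_0\ \tilde b_0\ \cdots\ \tilde a_{L-2}\ \tilde b_{L-2}\ \tilde b_{L-1}]$ in $\mathbb{R}^{1\times(2L-1)}$. If $\|F-\tilde F\|_2\le\epsilon$, then $\mathrm{gap}_L(\mathcal{B},\tilde{\mathcal{B}})\le\epsilon$.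
   Context: $\mathcal{L}^{q}$: class of complete (closed under pointwise convergence) linear time-invariant behaviors $\mathcal{B}\subseteq(\mathbb{R}^q)^{\mathbb{Z}_{\ge0}}$; $\mathcal{L}^{q,c}$ the subclass with complexity $c=(m,l,n)$ (number of inputs, lag, order). The restricted behavior $\mathcal{B}|_L\subseteq\mathbb{R}^{qL}$ is the set of length-$L$ windows of trajectories of $\mathcal{B}$ (here with coordinates ordered as in the claim, the same ordering used for both behaviors). For subspaces $\mathcal{V},\mathcal{W}\subseteq\mathbb{R}^N$ with orthogonal projectors $P_{\mathcal{V}},P_{\mathcal{W}}$, $\mathrm{gap}(\mathcal{V},\mathcal{W})=\|P_{\mathcal{V}}-P_{\mathcal{W}}\|_2$ (spectral norm), and $\mathrm{gap}_L(\mathcal{B},\tilde{\mathcal{B}})=\mathrm{gap}(\mathcal{B}|_L,\tilde{\mathcal{B}}|_L)$. For a row vector, $\|\cdot\|_2$ is the Euclidean norm. *)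

theory Defs
  imports "HOL-Analysis.Analysis"
begin

text \<open>Trajectories with q = 2 signals, w(t) = (u(t), y(t)).\<close>
type_synonym traj = "nat \<Rightarrow> real \<times> real"

definition lin_space :: "traj set \<Rightarrow> bool" where
  "lin_space B \<longleftrightarrow> (\<lambda>_. (0,0)) \<in> B \<and> (\<forall>v\<in>B. \<forall>w\<in>B. (\<lambda>t. v t + w t) \<in> B)
     \<and> (\<forall>c::real. \<forall>w\<in>B. (\<lambda>t. (c * fst (w t), c * snd (w t))) \<in> B)"

definition shift_invariant :: "traj set \<Rightarrow> bool" where
  "shift_invariant B \<longleftrightarrow> (\<forall>w\<in>B. (\<lambda>t. w (t + 1)) \<in> B)"

definition complete_beh :: "traj set \<Rightarrow> bool" where
  "complete_beh B \<longleftrightarrow> (\<forall>ws w. (\<forall>k. ws k \<in> B) \<and> (\<forall>t. (\<lambda>k. ws k t) \<longlonglongrightarrow> w t) \<longrightarrow> w \<in> B)"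

definition LTI2 :: "traj set \<Rightarrow> bool" where
  "LTI2 B \<longleftrightarrow> lin_space B \<and> shift_invariant B \<and> complete_beh B"

definition window :: "nat \<Rightarrow> traj \<Rightarrow> traj" where
  "window L w = (\<lambda>i. if i < L then w i else (0,0))"

definition restr :: "traj set \<Rightarrow> nat \<Rightarrow> traj set" where
  "restr B L = window L ` B"

text \<open>Lag: least l such that B is (l+1)-complete (Willems' characterization).\<close>
definition lag :: "traj set \<Rightarrow> nat" where
  "lag B = (LEAST l. \<forall>w. (\<forall>t. window (l+1) (\<lambda>i. w (t + i)) \<in> restr B (l+1)) \<longrightarrow> w \<in> B)"

text \<open>Coordinate vector in R^(2L), ordering col(y0,u0,...,y_{L-2},u_{L-2},u_{L-1},y_{L-1}),
  represented as nat => real with zeros at indices >= 2L.\<close>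
definition coordvec :: "nat \<Rightarrow> traj \<Rightarrow> (nat \<Rightarrow> real)" where
  "coordvec L v = (\<lambda>j. if j < 2*L then
       (if j = 2*L - 1 then snd (v (L - 1))
        else if j = 2*L - 2 then fst (v (L - 1))
        else if even j then snd (v (j div 2)) else fst (v (j div 2)))
     else 0)"

definition restrB :: "traj set \<Rightarrow> nat \<Rightarrow> (nat \<Rightarrow> real) set" where
  "restrB B L = coordvec L ` restr B L"

text \<open>Euclidean geometry on R^N, vectors as nat => real supported on {0..<N}.\<close>
definition vinner :: "nat \<Rightarrow> (nat \<Rightarrow> real) \<Rightarrow> (nat \<Rightarrow> real) \<Rightarrow> real" where
  "vinner N x z = (\<Sum>i<N. x i * z i)"

definition vnorm :: "nat \<Rightarrow> (nat \<Rightarrow> real) \<Rightarrow> real" where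
  "vnorm N x = sqrt (\<Sum>i<N. (x i)\<^sup>2)"

definition proj :: "nat \<Rightarrow> (nat \<Rightarrow> real) set \<Rightarrow> (nat \<Rightarrow> real) \<Rightarrow> (nat \<Rightarrow> real)" where
  "proj N V x = (THE p. p \<in> V \<and> (\<forall>v\<in>V. vinner N (\<lambda>i. x i - p i) v = 0))"

text \<open>gap(V,W) = spectral norm of P_V - P_W = sup over the unit ball.\<close>
definition gap :: "nat \<Rightarrow> (nat \<Rightarrow> real) set \<Rightarrow> (nat \<Rightarrow> real) set \<Rightarrow> real" where
  "gap N V W = Sup {vnorm N (\<lambda>i. proj N V x i - proj N W x i) | x. (\<forall>i\<ge>N. x i = 0) \<and> vnorm N x \<le> 1}"

definition gapL :: "nat \<Rightarrow> traj set \<Rightarrow> traj set \<Rightarrow> real" where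
  "gapL L B B' = gap (2*L) (restrB B L) (restrB B' L)"

definition Fvec :: "nat \<Rightarrow> (nat \<Rightarrow> real) \<Rightarrow> (nat \<Rightarrow> real) \<Rightarrow> (nat \<Rightarrow> real)" where
  "Fvec L a b = (\<lambda>j. if j < 2*L - 1 then
       (if j = 2*L - 2 then b (L - 1) else if even j then a (j div 2) else b (j div 2))
     else 0)"

end

theory Submission
  imports Defs
begin

text \<open>Both restricted behaviors are hyperplanes in \<open>\<real>\<^sup>2\<^sup>L\<close> with normals
  \<open>n = [-F 1]\<close> and \<open>m = [-F' 1]\<close>. For hyperplanes the difference of the projections is
  the difference of the rank-one projections onto the normals, whose norm is the sine of the
  angle between \<open>n\<close> and \<open>m\<close>; this sine is \<open>dist(m, span n)/|m| \<le> |m - n|\<close>, because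
  the last coordinate of \<open>m\<close> is \<open>1\<close>, so \<open>|m| \<ge> 1\<close>.
  Only the descriptions of the restricted behaviors enter.\<close>

definition hyperplane :: "nat \<Rightarrow> (nat \<Rightarrow> real) \<Rightarrow> (nat \<Rightarrow> real) set" where
  "hyperplane N n = {v. (\<forall>i\<ge>N. v i = 0) \<and> vinner N n v = 0}"

lemma vinner_sym: "vinner N x z = vinner N z x"
  by (simp add: vinner_def mult.commute)

lemma vinner_diff_right: "vinner N x (\<lambda>i. y i - z i) = vinner N x y - vinner N x z"
  by (simp add: vinner_def algebra_simps sum_subtractf)

lemma vinner_diff_left: "vinner N (\<lambda>i. y i - z i) x = vinner N y x - vinner N z x"
  by (simp add: vinner_def algebra_simps sum_subtractf)

lemma vinner_scale_right: "vinner N x (\<lambda>i. c * y i) = c * vinner N x y"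
  by (simp add: vinner_def algebra_simps sum_distrib_left)

lemma vinner_scale_left: "vinner N (\<lambda>i. c * y i) x = c * vinner N y x"
  by (simp add: vinner_def algebra_simps sum_distrib_left)

lemma vinner_lincomb:
  "vinner N (\<lambda>i. a * x i - b * y i) (\<lambda>i. c * z i - d * w i)
   = a * c * vinner N x z - a * d * vinner N x w - b * c * vinner N y z + b * d * vinner N y w"
  by (simp add: vinner_def algebra_simps sum_subtractf sum.distrib sum_distrib_left)

lemma vinner_self_nonneg: "vinner N x x \<ge> 0"
  by (simp add: vinner_def sum_nonneg)

lemma vinner_self_eq_0_iff: "vinner N x x = 0 \<longleftrightarrow> (\<forall>i<N. x i = 0)"
  by (auto simp: vinner_def sum_nonneg_eq_0_iff)

lemma vnorm_vinner: "vnorm N x = sqrt (vinner N x x)"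
  by (simp add: vnorm_def vinner_def power2_eq_square)

lemma vinner_Cauchy_Schwarz: "(vinner N x z)\<^sup>2 \<le> vinner N x x * vinner N z z"
  using Cauchy_Schwarz_ineq_sum[of x z "{..<N}"] by (simp add: vinner_def power2_eq_square)

lemma vinner_self_ge_1_if_last_1:
  assumes "N \<ge> 1" "n (N - 1) = 1"
  shows "vinner N n n \<ge> 1"
proof -
  have "n (N - 1) * n (N - 1) \<le> (\<Sum>i<N. n i * n i)"
    by (rule member_le_sum[where f = "\<lambda>i. n i * n i"]) (use assms in auto)
  then show ?thesis using assms by (simp add: vinner_def)
qed

lemma proj_hyperplane:
  assumes n: "\<forall>i\<ge>N. n i = 0" and nn: "vinner N n n > 0" and x: "\<forall>i\<ge>N. x i = 0"
  shows "proj N (hyperplane N n) x = (\<lambda>i. x i - vinner N n x / vinner N n n * n i)"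
proof -
  define c where "c = vinner N n x / vinner N n n"
  define p where "p = (\<lambda>i. x i - c * n i)"
  have "vinner N n p = vinner N n x - c * vinner N n n"
    unfolding p_def by (simp add: vinner_diff_right vinner_scale_right)
  then have p_in: "p \<in> hyperplane N n"
    using n x nn by (simp add: hyperplane_def p_def c_def)
  have p_orth: "vinner N (\<lambda>i. x i - p i) v = 0" if "v \<in> hyperplane N n" for v
    using that by (simp add: hyperplane_def p_def vinner_scale_left)
  have unique: "q = p" if q_in: "q \<in> hyperplane N n"
    and q_orth: "\<forall>v\<in>hyperplane N n. vinner N (\<lambda>i. x i - q i) v = 0" for q
  proof -
    define w where "w = (\<lambda>i. p i - q i)"
    have w_in: "w \<in> hyperplane N n"
      using p_in q_in by (simp add: hyperplane_def w_def vinner_diff_right)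
    have "w = (\<lambda>i. (x i - q i) - (x i - p i))" by (auto simp: w_def)
    then have "vinner N w w = vinner N (\<lambda>i. x i - q i) w - vinner N (\<lambda>i. x i - p i) w"
      by (metis vinner_diff_left)
    also have "\<dots> = 0" using q_orth p_orth w_in by simp
    finally have "\<forall>i<N. p i = q i" by (simp add: vinner_self_eq_0_iff w_def)
    moreover have "\<forall>i\<ge>N. p i = q i" using p_in q_in by (simp add: hyperplane_def)
    ultimately show "q = p" by (metis linorder_not_le ext)
  qed
  have "proj N (hyperplane N n) x = p"
    unfolding proj_def by (rule the_equality) (use p_in p_orth unique in blast)+
  then show ?thesis by (simp add: p_def c_def)
qed

text \<open>Nonnegativity of the Gram determinant of \<open>n, m, x\<close>, obtained from Cauchy--Schwarz
  for the components of \<open>x\<close> and \<open>m\<close> orthogonal to \<open>n\<close> (scaled by \<open>|n|\<^sup>2\<close>).\<close>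
lemma gram_det_nonneg:
  assumes "vinner N n n > 0"
  shows "vinner N n n * vinner N m m * vinner N x x - vinner N n n * (vinner N m x)\<^sup>2
     - vinner N m m * (vinner N n x)\<^sup>2 - (vinner N n m)\<^sup>2 * vinner N x x
     + 2 * vinner N n m * vinner N n x * vinner N m x \<ge> 0"
proof -
  define nn mm X al be nm where "nn = vinner N n n" and "mm = vinner N m m"
    and "X = vinner N x x" and "al = vinner N n x" and "be = vinner N m x" and "nm = vinner N n m"
  have sym: "vinner N x n = al" "vinner N x m = be" "vinner N m n = nm"
    by (simp_all add: al_def be_def nm_def vinner_sym)
  define w z where "w = (\<lambda>i. nn * x i - al * n i)" and "z = (\<lambda>i. nn * m i - nm * n i)"
  have wz: "vinner N w z = nn * (nn * be - al * nm)"
    unfolding w_def z_def vinner_lincomb using sym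
    by (simp add: nn_def[symmetric] al_def[symmetric] nm_def[symmetric]) (simp add: algebra_simps)
  have ww: "vinner N w w = nn * (nn * X - al\<^sup>2)"
    unfolding w_def vinner_lincomb using sym
    by (simp add: nn_def[symmetric] al_def[symmetric] X_def[symmetric])
      (simp add: algebra_simps power2_eq_square)
  have zz: "vinner N z z = nn * (nn * mm - nm\<^sup>2)"
    unfolding z_def vinner_lincomb using sym
    by (simp add: nn_def[symmetric] mm_def[symmetric] nm_def[symmetric])
      (simp add: algebra_simps power2_eq_square)
  have "nn\<^sup>2 * (nn * be - al * nm)\<^sup>2 \<le> nn\<^sup>2 * ((nn * X - al\<^sup>2) * (nn * mm - nm\<^sup>2))"
    using vinner_Cauchy_Schwarz[of N w z] wz ww zz by (simp add: algebra_simps power2_eq_square)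
  then have "(nn * be - al * nm)\<^sup>2 \<le> (nn * X - al\<^sup>2) * (nn * mm - nm\<^sup>2)"
    using assms nn_def by simp
  moreover have "nn * (nn * mm * X - nn * be\<^sup>2 - mm * al\<^sup>2 - nm\<^sup>2 * X + 2 * nm * al * be)
        = (nn * X - al\<^sup>2) * (nn * mm - nm\<^sup>2) - (nn * be - al * nm)\<^sup>2"
    by (simp add: algebra_simps power2_eq_square)
  ultimately have "nn * (nn * mm * X - nn * be\<^sup>2 - mm * al\<^sup>2 - nm\<^sup>2 * X + 2 * nm * al * be) \<ge> 0"
    by simp
  then show ?thesis
    using assms by (simp add: zero_le_mult_iff nn_def mm_def X_def al_def be_def nm_def)
qed

lemma gap_le:
  assumes "\<And>x. \<forall>i\<ge>N. x i = 0 \<Longrightarrow> vnorm N x \<le> 1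
             \<Longrightarrow> vnorm N (\<lambda>i. proj N V x i - proj N W x i) \<le> c"
  shows "gap N V W \<le> c"
  unfolding gap_def
proof (rule cSup_least)
  show "{vnorm N (\<lambda>i. proj N V x i - proj N W x i) |x. (\<forall>i\<ge>N. x i = 0) \<and> vnorm N x \<le> 1} \<noteq> {}"
    by (auto intro!: exI[of _ "\<lambda>_. 0"] simp: vnorm_def)
qed (use assms in blast)

lemma gap_hyperplane_le_sine:
  assumes n: "\<forall>i\<ge>N. n i = 0" and m: "\<forall>i\<ge>N. m i = 0"
    and n_pos: "vinner N n n > 0" and m_pos: "vinner N m m > 0"
  shows "gap N (hyperplane N n) (hyperplane N m)
         \<le> sqrt (1 - (vinner N n m)\<^sup>2 / (vinner N n n * vinner N m m))"
proof (rule gap_le)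
  define nn mm nm where "nn = vinner N n n" and "mm = vinner N m m" and "nm = vinner N n m"
  have nn: "nn > 0" and mm: "mm > 0" using n_pos m_pos by (simp_all add: nn_def mm_def)
  have sin2: "1 - nm\<^sup>2 / (nn * mm) \<ge> 0"
    using vinner_Cauchy_Schwarz[of N n m] nn mm
    by (simp add: nn_def[symmetric] mm_def[symmetric] nm_def[symmetric] field_simps)
  fix x assume x: "\<forall>i\<ge>N. x i = 0" and x1: "vnorm N x \<le> 1"
  define X al be where "X = vinner N x x" and "al = vinner N n x" and "be = vinner N m x"
  have X1: "X \<le> 1"
    using x1 vinner_self_nonneg[of N x] by (simp add: vnorm_vinner X_def)
  have diff: "(\<lambda>i. proj N (hyperplane N n) x i - proj N (hyperplane N m) x i)
      = (\<lambda>i. be / mm * m i - al / nn * n i)"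
    using proj_hyperplane[OF n n_pos x] proj_hyperplane[OF m m_pos x]
    by (simp add: nn_def mm_def al_def be_def)
  have "vinner N (\<lambda>i. be / mm * m i - al / nn * n i) (\<lambda>i. be / mm * m i - al / nn * n i)
      = (be / mm)\<^sup>2 * mm - 2 * (be / mm) * (al / nn) * nm + (al / nn)\<^sup>2 * nn"
    unfolding vinner_lincomb vinner_sym[of N m n]
    by (simp add: nn_def[symmetric] mm_def[symmetric] nm_def[symmetric] power2_eq_square)
  also have "\<dots> = (nn * be\<^sup>2 - 2 * nm * al * be + mm * al\<^sup>2) / (nn * mm)"
    using nn mm by (simp add: field_simps power2_eq_square)
  also have "\<dots> \<le> X * (nn * mm - nm\<^sup>2) / (nn * mm)"
  proof (rule divide_right_mono)
    show "nn * be\<^sup>2 - 2 * nm * al * be + mm * al\<^sup>2 \<le> X * (nn * mm - nm\<^sup>2)"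
      using gram_det_nonneg[OF n_pos, of m x]
      unfolding nn_def[symmetric] mm_def[symmetric] nm_def[symmetric] X_def[symmetric]
        al_def[symmetric] be_def[symmetric]
      by (simp add: algebra_simps)
  qed (use nn mm in simp)
  also have "\<dots> = X * (1 - nm\<^sup>2 / (nn * mm))"
    using nn mm by (simp add: field_simps)
  also have "\<dots> \<le> 1 - nm\<^sup>2 / (nn * mm)"
    using mult_right_mono[OF X1 sin2] by simp
  finally show "vnorm N (\<lambda>i. proj N (hyperplane N n) x i - proj N (hyperplane N m) x i)
      \<le> sqrt (1 - (vinner N n m)\<^sup>2 / (vinner N n n * vinner N m m))"
    unfolding diff vnorm_vinner nn_def[symmetric] mm_def[symmetric] nm_def[symmetric]
    by (rule real_sqrt_le_mono)
qed

lemma gap_hyperplane_le_dist: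
  assumes N: "N \<ge> 1" and n: "\<forall>i\<ge>N. n i = 0" and m: "\<forall>i\<ge>N. m i = 0"
    and n1: "n (N - 1) = 1" and m1: "m (N - 1) = 1"
  shows "gap N (hyperplane N n) (hyperplane N m) \<le> vnorm N (\<lambda>i. m i - n i)"
proof -
  define nn mm nm dd where "nn = vinner N n n" and "mm = vinner N m m" and "nm = vinner N n m"
    and "dd = vinner N (\<lambda>i. m i - n i) (\<lambda>i. m i - n i)"
  have nn: "nn \<ge> 1" and mm: "mm \<ge> 1"
    using vinner_self_ge_1_if_last_1[of N n, OF N n1] vinner_self_ge_1_if_last_1[of N m, OF N m1]
    by (simp_all add: nn_def mm_def)
  have dd: "dd \<ge> 0" by (simp add: dd_def vinner_self_nonneg)
  have dd_eq: "dd = mm - 2 * nm + nn"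
    using vinner_lincomb[of N 1 m 1 n 1 m 1 n] vinner_sym[of N m n]
    by (simp add: dd_def mm_def nn_def nm_def)
  have "nn * mm - nm\<^sup>2 = nn * dd - (nm - nn)\<^sup>2"
    unfolding dd_eq power2_eq_square by algebra
  then have "nn * mm - nm\<^sup>2 \<le> nn * dd"
    by simp
  also have "\<dots> \<le> nn * mm * dd"
    using nn mm dd by (simp add: mult_right_mono)
  finally have "1 - nm\<^sup>2 / (nn * mm) \<le> dd"
    using nn mm by (simp add: field_simps)
  then have "sqrt (1 - nm\<^sup>2 / (nn * mm)) \<le> vnorm N (\<lambda>i. m i - n i)"
    by (simp add: vnorm_vinner dd_def)
  moreover have "gap N (hyperplane N n) (hyperplane N m) \<le> sqrt (1 - nm\<^sup>2 / (nn * mm))"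
    unfolding nn_def mm_def nm_def using n m nn mm
    by (intro gap_hyperplane_le_sine) (simp_all add: nn_def mm_def)
  ultimately show ?thesis by linarith
qed

definition normal_vec :: "nat \<Rightarrow> (nat \<Rightarrow> real) \<Rightarrow> (nat \<Rightarrow> real) \<Rightarrow> nat \<Rightarrow> real" where
  "normal_vec L a b = (\<lambda>j. if j = 2*L - 1 then 1 else - Fvec L a b j)"

lemma sum_Fvec_coordvec:
  "(\<Sum>j<2*M+1. Fvec (Suc M) a b j * coordvec (Suc M) w j)
   = (\<Sum>k<M. a k * snd (w k)) + (\<Sum>k<Suc M. b k * fst (w k))"
proof -
  let ?f = "\<lambda>j. Fvec (Suc M) a b j * coordvec (Suc M) w j"
  have "(\<Sum>j<2*M. ?f j) = (\<Sum>k<M. ?f (2*k)) + (\<Sum>k<M. ?f (2*k+1))"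
    using sum_split_even_odd[of ?f ?f M] by simp
  also have "\<dots> = (\<Sum>k<M. a k * snd (w k)) + (\<Sum>k<M. b k * fst (w k))"
    by (simp add: Fvec_def coordvec_def)
  finally show ?thesis
    by (simp add: Fvec_def coordvec_def)
qed

lemma vinner_normal_vec:
  "vinner (2*M+2) (normal_vec (Suc M) a b) x
   = x (2*M+1) - (\<Sum>j<2*M+1. Fvec (Suc M) a b j * x j)"
proof -
  have "(\<Sum>j<2*M+1. normal_vec (Suc M) a b j * x j) = - (\<Sum>j<2*M+1. Fvec (Suc M) a b j * x j)"
    by (simp add: normal_vec_def sum_negf[symmetric])
  then show ?thesis by (simp add: vinner_def normal_vec_def)
qed

lemma coordvec_image_eq_hyperplane:
  "coordvec (Suc M) ` {v. (\<forall>i\<ge>Suc M. v i = (0,0)) \<and>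
       snd (v (Suc M - 1)) = (\<Sum>k<Suc M - 1. a k * snd (v k)) + (\<Sum>k<Suc M. b k * fst (v k))}
   = hyperplane (2*Suc M) (normal_vec (Suc M) a b)"
  (is "coordvec _ ` ?S = ?H")
proof
  show "coordvec (Suc M) ` ?S \<subseteq> ?H"
  proof
    fix x assume "x \<in> coordvec (Suc M) ` ?S"
    then obtain w where w: "snd (w M) = (\<Sum>k<M. a k * snd (w k)) + (\<Sum>k<Suc M. b k * fst (w k))"
      and x: "x = coordvec (Suc M) w" by auto
    have "vinner (2*Suc M) (normal_vec (Suc M) a b) x = 0"
      using vinner_normal_vec[of M a b x] w unfolding x sum_Fvec_coordvec
      by (simp add: coordvec_def)
    then show "x \<in> ?H" using x by (simp add: hyperplane_def coordvec_def)
  qed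
next
  show "?H \<subseteq> coordvec (Suc M) ` ?S"
  proof
    fix x assume x: "x \<in> ?H"
    \<comment> \<open>Undo the interleaving of \<open>coordvec\<close>; the last input and output are swapped.\<close>
    define w where "w = (\<lambda>i. if i < M then (x (2*i+1), x (2*i))
                              else if i = M then (x (2*M), x (2*M+1)) else (0,0))"
    have w_x: "coordvec (Suc M) w = x"
    proof
      fix j
      consider "j < 2*M" "even j" | "j < 2*M" "odd j" | "j = 2*M" | "j = 2*M+1" | "j \<ge> 2*M+2"
        by linarith
      then show "coordvec (Suc M) w j = x j"
        by cases (use x in \<open>auto simp: coordvec_def w_def hyperplane_def elim!: evenE oddE\<close>)
    qed
    have "0 = vinner (2*Suc M) (normal_vec (Suc M) a b) x"
      using x by (simp add: hyperplane_def)
    also have "\<dots> = snd (w M) - ((\<Sum>k<M. a k * snd (w k)) + (\<Sum>k<Suc M. b k * fst (w k)))"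
      using vinner_normal_vec[of M a b x] sum_Fvec_coordvec[of M a b w]
      unfolding w_x by (simp add: w_def)
    finally have "w \<in> ?S" by (simp add: w_def)
    then show "x \<in> coordvec (Suc M) ` ?S" using w_x by blast
  qed
qed

lemma vnorm_normal_vec_diff:
  "vnorm (2*Suc M) (\<lambda>i. normal_vec (Suc M) a' b' i - normal_vec (Suc M) a b i)
   = vnorm (2*Suc M - 1) (\<lambda>j. Fvec (Suc M) a b j - Fvec (Suc M) a' b' j)"
proof -
  have "(\<Sum>i<2*M+1. (normal_vec (Suc M) a' b' i - normal_vec (Suc M) a b i)\<^sup>2)
      = (\<Sum>i<2*M+1. (Fvec (Suc M) a b i - Fvec (Suc M) a' b' i)\<^sup>2)"
    by (rule sum.cong) (auto simp: normal_vec_def power2_eq_square algebra_simps)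
  then show ?thesis by (simp add: vnorm_def normal_vec_def)
qed

theorem corollary2:
  fixes L :: nat and a b a' b' :: "nat \<Rightarrow> real" and B B' :: "traj set" and \<epsilon> :: real
  assumes "L \<ge> 2"
    and "LTI2 B" and "LTI2 B'" and "lag B' < L"
    and "restr B L = {v. (\<forall>i\<ge>L. v i = (0,0)) \<and>
           snd (v (L - 1)) = (\<Sum>k<L - 1. a k * snd (v k)) + (\<Sum>k<L. b k * fst (v k))}"
    and "restr B' L = {v. (\<forall>i\<ge>L. v i = (0,0)) \<and>
           snd (v (L - 1)) = (\<Sum>k<L - 1. a' k * snd (v k)) + (\<Sum>k<L. b' k * fst (v k))}"
    and "vnorm (2*L - 1) (\<lambda>j. Fvec L a b j - Fvec L a' b' j) \<le> \<epsilon>"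
  shows "gapL L B B' \<le> \<epsilon>"
proof -
  obtain M where L: "L = Suc M" using assms(1) by (cases L) auto
  have "gapL L B B'
      = gap (2*L) (hyperplane (2*L) (normal_vec L a b)) (hyperplane (2*L) (normal_vec L a' b'))"
    using assms(5,6) coordvec_image_eq_hyperplane[of M a b] coordvec_image_eq_hyperplane[of M a' b']
    unfolding gapL_def restrB_def L by simp
  also have "\<dots> \<le> vnorm (2*L) (\<lambda>i. normal_vec L a' b' i - normal_vec L a b i)"
    by (rule gap_hyperplane_le_dist) (auto simp: L normal_vec_def Fvec_def)
  also have "\<dots> = vnorm (2*L - 1) (\<lambda>j. Fvec L a b j - Fvec L a' b' j)"
    unfolding L by (rule vnorm_normal_vec_diff)
  finally show ?thesis using assms(7) by linarith
qed

end
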